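(* Let $\kappa$ be an infinite cardinal and $\tau=\max(\kappa^+,\kappa^\omega)$. There exists a (continuous) homogeneous quadratic polynomial $P:\ell_1(\tau)\to\mathbb{C}$ which has a maximal zero subspace of density $\kappa$ and another maximal zero subspace of density $\tau$.
   Context: Banach spaces are complex. A zero subspace of $P$ is a linear subspace on which $P$ vanishes identically; it is maximal if not properly contained in another zero subspace. Density of a space means the least cardinality of a dense subset. *)

theory Defs
  imports "HOL-Analysis.Analysis"
begin

definition l1 :: "'t set \<Rightarrow> ('t \<Rightarrow> complex) set" where
  "l1 T = {x. (\<forall>i. i \<notin> T \<longrightarrow> x i = 0) \<and> (\<lambda>i. norm (x i)) summable_on T}"

definition l1norm :: "'t set \<Rightarrow> ('t \<Rightarrow> complex) \<Rightarrow> real" where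
  "l1norm T x = infsum (\<lambda>i. norm (x i)) T"

definition cont_quad_poly :: "'t set \<Rightarrow> (('t \<Rightarrow> complex) \<Rightarrow> complex) \<Rightarrow> bool" where
  "cont_quad_poly T P \<longleftrightarrow>
    (\<exists>B :: ('t \<Rightarrow> complex) \<Rightarrow> ('t \<Rightarrow> complex) \<Rightarrow> complex. \<exists>C :: real.
      (\<forall>x\<in>l1 T. \<forall>y\<in>l1 T. \<forall>z\<in>l1 T. \<forall>a b :: complex.
          B (\<lambda>i. a * x i + b * y i) z = a * B x z + b * B y z \<and>
          B z (\<lambda>i. a * x i + b * y i) = a * B z x + b * B z y) \<and>
      (\<forall>x\<in>l1 T. \<forall>y\<in>l1 T. norm (B x y) \<le> C * l1norm T x * l1norm T y) \<and>
      (\<forall>x\<in>l1 T. P x = B x x))"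

definition l1_subspace :: "'t set \<Rightarrow> ('t \<Rightarrow> complex) set \<Rightarrow> bool" where
  "l1_subspace T V \<longleftrightarrow> V \<subseteq> l1 T \<and> (\<lambda>i. 0) \<in> V \<and>
     (\<forall>x\<in>V. \<forall>y\<in>V. \<forall>a b :: complex. (\<lambda>i. a * x i + b * y i) \<in> V)"

definition zero_subspace :: "'t set \<Rightarrow> (('t \<Rightarrow> complex) \<Rightarrow> complex) \<Rightarrow> ('t \<Rightarrow> complex) set \<Rightarrow> bool" where
  "zero_subspace T P V \<longleftrightarrow> l1_subspace T V \<and> (\<forall>v\<in>V. P v = 0)"

definition maximal_zero_subspace :: "'t set \<Rightarrow> (('t \<Rightarrow> complex) \<Rightarrow> complex) \<Rightarrow> ('t \<Rightarrow> complex) set \<Rightarrow> bool" where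
  "maximal_zero_subspace T P V \<longleftrightarrow> zero_subspace T P V \<and>
     (\<forall>W. zero_subspace T P W \<and> V \<subseteq> W \<longrightarrow> W = V)"

definition l1_dense_in :: "'t set \<Rightarrow> ('t \<Rightarrow> complex) set \<Rightarrow> ('t \<Rightarrow> complex) set \<Rightarrow> bool" where
  "l1_dense_in T D V \<longleftrightarrow> D \<subseteq> V \<and>
     (\<forall>v\<in>V. \<forall>e>0. \<exists>d\<in>D. l1norm T (\<lambda>i. v i - d i) < e)"

definition has_density :: "'t set \<Rightarrow> ('t \<Rightarrow> complex) set \<Rightarrow> 'a set \<Rightarrow> bool" where
  "has_density T V A \<longleftrightarrow>
     (\<exists>D. l1_dense_in T D V \<and> (card_of D, card_of A) \<in> ordIso) \<and>
     (\<forall>D. l1_dense_in T D V \<longrightarrow> (card_of A, card_of D) \<in> ordLeq)"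

end

theory Submission
  imports Defs
begin

text \<open>Let \<open>\<kappa> = |K|\<close>; the hypotheses on \<open>\<tau> = |T|\<close> are used only through \<open>\<kappa> < \<tau> \<le> 2\<^sup>\<kappa>\<close>.
  Split \<open>T = R \<union> S\<close> with \<open>|R| = \<kappa>\<close> and \<open>|S| = \<tau>\<close>. Index \<open>R\<close> by the \<open>\<kappa>\<close> basic cylinders of \<open>2\<^sup>K\<close>
  (finite lists of membership conditions) and code \<open>S\<close> injectively by subsets of \<open>K\<close>, and put
  \<open>P(x) = \<Sum> [code s \<in> cylinder r] x\<^sub>r x\<^sub>s\<close>, summed over \<open>r \<in> R\<close> and \<open>s \<in> S\<close>.
  Then \<open>\<ell>\<^sub>1(R)\<close> is a zero subspace, and it is maximal: if \<open>w\<close> lies in a zero subspace containing it,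
  \<open>P(e\<^sub>r + w) = P(w) = 0\<close> makes every cylinder sum of \<open>w|\<^sub>S\<close> vanish, and since cylinders separate
  the points of \<open>2\<^sup>K\<close>, an \<open>\<ell>\<^sub>1\<close> tail estimate gives \<open>w|\<^sub>S = 0\<close>. Also \<open>\<ell>\<^sub>1(S)\<close> is a zero subspace; by Zorn
  it extends to a maximal one, which contains the \<open>\<tau>\<close> unit vectors \<open>e\<^sub>s\<close> at mutual distance 2 and
  hence has density \<open>\<tau>\<close>, while \<open>\<ell>\<^sub>1(R)\<close> has density \<open>\<kappa>\<close>.\<close>

unbundle cardinal_syntax

section \<open>The space \<open>\<ell>\<^sub>1(T)\<close>\<close>

lemma l1_lincomb:
  assumes "x \<in> l1 T" "y \<in> l1 T"
  shows "(\<lambda>i. a * x i + b * y i) \<in> l1 T"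
proof -
  have "(\<lambda>i. norm a * norm (x i) + norm b * norm (y i)) summable_on T"
    using assms by (intro summable_on_add summable_on_cmult_right) (auto simp: l1_def)
  hence "(\<lambda>i. norm (a * x i + b * y i)) summable_on T"
    by (rule summable_on_comparison_test) (auto intro!: order.trans[OF norm_triangle_ineq] simp: norm_mult)
  thus ?thesis using assms by (auto simp: l1_def)
qed

lemma l1_diff: "x \<in> l1 T \<Longrightarrow> y \<in> l1 T \<Longrightarrow> (\<lambda>i. x i - y i) \<in> l1 T"
  using l1_lincomb[of x T y 1 "-1"] by simp

lemma l1_zero: "(\<lambda>i. 0) \<in> l1 T"
  by (simp add: l1_def)

lemma l1_summable_norm_on: "x \<in> l1 T \<Longrightarrow> A \<subseteq> T \<Longrightarrow> (\<lambda>i. norm (x i)) summable_on A"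
  by (auto simp: l1_def intro: summable_on_subset_banach)

lemma infsum_norm_le_l1norm:
  assumes "x \<in> l1 T" "A \<subseteq> T"
  shows "(\<Sum>\<^sub>\<infinity>i\<in>A. norm (x i)) \<le> l1norm T x"
  unfolding l1norm_def
  by (rule infsum_mono_neutral) (use assms in \<open>auto intro: l1_summable_norm_on\<close>)

lemma l1norm_nonneg: "l1norm T x \<ge> 0"
  by (auto simp: l1norm_def intro: infsum_nonneg)

lemma l1norm_diff_commute: "l1norm T (\<lambda>i. x i - y i) = l1norm T (\<lambda>i. y i - x i)"
  by (simp add: l1norm_def norm_minus_commute)

lemma l1norm_diff_triangle:
  assumes "x \<in> l1 T" "y \<in> l1 T" "z \<in> l1 T"
  shows "l1norm T (\<lambda>i. x i - z i) \<le> l1norm T (\<lambda>i. x i - y i) + l1norm T (\<lambda>i. y i - z i)"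
proof -
  have s: "(\<lambda>i. norm (x i - y i)) summable_on T" "(\<lambda>i. norm (y i - z i)) summable_on T"
       "(\<lambda>i. norm (x i - z i)) summable_on T"
    using assms by (auto intro: l1_diff l1_summable_norm_on)
  have "(\<Sum>\<^sub>\<infinity>i\<in>T. norm (x i - z i)) \<le> (\<Sum>\<^sub>\<infinity>i\<in>T. norm (x i - y i) + norm (y i - z i))"
    by (rule infsum_mono[OF s(3) summable_on_add[OF s(1,2)]]) (metis norm_triangle_ineq diff_add_cancel add_diff_eq)
  also have "\<dots> = (\<Sum>\<^sub>\<infinity>i\<in>T. norm (x i - y i)) + (\<Sum>\<^sub>\<infinity>i\<in>T. norm (y i - z i))"
    by (rule infsum_add[OF s(1,2)])
  finally show ?thesis by (simp add: l1norm_def)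
qed

definition unit_vec :: "'t \<Rightarrow> 't \<Rightarrow> complex" where
  "unit_vec a = (\<lambda>i. if i = a then 1 else 0)"

lemma unit_vec_l1: "a \<in> T \<Longrightarrow> unit_vec a \<in> l1 T"
  unfolding l1_def
  by (auto simp: unit_vec_def split: if_splits intro!: finite_nonzero_values_imp_summable_on finite_subset[of _ "{a}"])

lemma l1norm_unit_vec_diff:
  assumes "a \<in> T" "b \<in> T" "a \<noteq> b"
  shows "l1norm T (\<lambda>i. unit_vec a i - unit_vec b i) = 2"
proof -
  have "l1norm T (\<lambda>i. unit_vec a i - unit_vec b i) = (\<Sum>\<^sub>\<infinity>i\<in>{a,b}. norm (unit_vec a i - unit_vec b i))"
    unfolding l1norm_def by (rule infsum_cong_neutral) (use assms in \<open>auto simp: unit_vec_def\<close>)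
  also have "\<dots> = 2" using assms by (simp add: unit_vec_def)
  finally show ?thesis .
qed

lemma infsum_tail_le:
  fixes f :: "'a \<Rightarrow> real"
  assumes "f summable_on A" "e > 0"
  obtains F where "finite F" "F \<subseteq> A" "(\<Sum>\<^sub>\<infinity>i\<in>A - F. f i) \<le> e"
proof -
  obtain F where F: "finite F" "F \<subseteq> A" "dist (sum f F) (infsum f A) \<le> e"
    using infsum_finite_approximation[OF assms] by blast
  have "infsum f A = infsum f (F \<union> (A - F))" using F(2) by (simp add: Un_absorb1)
  also have "\<dots> = sum f F + infsum f (A - F)"
    using F(1) by (subst infsum_Un_disjoint) (auto intro: summable_on_subset_banach[OF assms(1)])
  finally have "infsum f (A - F) \<le> e" using F(3) by (simp add: dist_real_def)
  with F show thesis by (intro that)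
qed

section \<open>Cardinal arithmetic\<close>

lemma card_of_length_lists_le_infinite:
  assumes "infinite X"
  shows "|{xs \<in> lists X. length xs = n}| \<le>o |X|"
proof (induction n)
  case 0
  have "{xs \<in> lists X. length xs = 0} = {[]}" by auto
  thus ?case using card_of_singl_ordLeq[of X "[]"] assms by auto
next
  case (Suc n)
  have "{xs \<in> lists X. length xs = Suc n} = (\<lambda>(x, xs). x # xs) ` (X \<times> {xs \<in> lists X. length xs = n})"
  proof (rule set_eqI, rule iffI)
    fix ys assume "ys \<in> {xs \<in> lists X. length xs = Suc n}"
    then obtain y zs where "ys = y # zs" "y \<in> X" "zs \<in> lists X" "length zs = n"
      by (cases ys) auto
    thus "ys \<in> (\<lambda>(x, xs). x # xs) ` (X \<times> {xs \<in> lists X. length xs = n})"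
      by (intro image_eqI[of _ _ "(y, zs)"]) auto
  qed auto
  hence "|{xs \<in> lists X. length xs = Suc n}| \<le>o |X \<times> {xs \<in> lists X. length xs = n}|"
    by (simp add: card_of_image)
  also have "|X \<times> {xs \<in> lists X. length xs = n}| \<le>o |X \<times> X|"
    by (rule card_of_Times_mono2[OF Suc.IH])
  also have "|X \<times> X| =o |X|" by (rule card_of_Times_same_infinite[OF assms])
  finally show ?case .
qed

lemma card_of_lists_le_infinite:
  assumes "infinite X"
  shows "|lists X| \<le>o |X|"
proof -
  have "lists X = (\<Union>n. {xs \<in> lists X. length xs = n})" by auto
  moreover have "|\<Union>n. {xs \<in> lists X. length xs = n}| \<le>o |X|"
    using assms infinite_iff_card_of_nat card_of_length_lists_le_infinite[OF assms]
    by (intro card_of_UNION_ordLeq_infinite) auto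
  ultimately show ?thesis by simp
qed

lemma card_of_Func_nat_le_Pow:
  assumes "infinite K"
  shows "|Func (UNIV :: nat set) K| \<le>o |Pow K|"
proof -
  \<comment> \<open>a sequence in \<open>K\<close> is determined by its graph, a subset of \<open>\<nat> \<times> K \<approx> K\<close>\<close>
  have "|(UNIV :: nat set)| \<le>o |K|" using assms infinite_iff_card_of_nat by blast
  hence "|(UNIV :: nat set) \<times> K| =o |K|" using card_of_Times_infinite[OF assms] by blast
  then obtain h where h: "bij_betw h ((UNIV :: nat set) \<times> K) K" using card_of_ordIso by blast
  define graph where "graph f = (\<lambda>n. h (n, f n)) ` (UNIV :: nat set)" for f :: "nat \<Rightarrow> 'a"
  have "inj_on graph (Func UNIV K)"
  proof (rule inj_onI)
    fix f1 f2 assume f: "f1 \<in> Func UNIV K" "f2 \<in> Func UNIV K" and eq: "graph f1 = graph f2"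
    show "f1 = f2"
    proof
      fix n
      have "h (n, f1 n) \<in> graph f2" using eq unfolding graph_def by auto
      then obtain m where "h (n, f1 n) = h (m, f2 m)" unfolding graph_def by auto
      moreover have "(n, f1 n) \<in> UNIV \<times> K" "(m, f2 m) \<in> UNIV \<times> K" using f unfolding Func_def by auto
      ultimately have "(n, f1 n) = (m, f2 m)" using h unfolding bij_betw_def inj_on_def by blast
      thus "f1 n = f2 n" by auto
    qed
  qed
  moreover have "graph ` Func UNIV K \<subseteq> Pow K"
    using h unfolding graph_def Func_def bij_betw_def by auto
  ultimately show ?thesis unfolding card_of_ordLeq[symmetric] by blast
qed

lemma card_of_max_cardSuc_Func_bounds:
  fixes K :: "'k set" and T :: "'t set"
  assumes K: "infinite K"
    and suc: "(card_of (Func (UNIV :: nat set) K), cardSuc (card_of K)) \<in> ordLeq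
           \<longrightarrow> (card_of T, cardSuc (card_of K)) \<in> ordIso"
    and func: "(cardSuc (card_of K), card_of (Func (UNIV :: nat set) K)) \<in> ordLeq
           \<longrightarrow> (card_of T, card_of (Func (UNIV :: nat set) K)) \<in> ordIso"
  shows "|K| <o |T|" and "|T| \<le>o |Pow K|"
proof -
  have cK: "Card_order |K|" by (rule card_of_Card_order)
  have suc_le_Pow: "cardSuc (card_of K) \<le>o |Pow K|"
    using cardSuc_ordLess_ordLeq[OF cK card_of_Card_order] card_of_Pow by blast
  have "Well_order (cardSuc (card_of K))"
    using cardSuc_Card_order[OF cK] card_order_on_well_order_on by blast
  hence "|Func (UNIV :: nat set) K| \<le>o cardSuc (card_of K) \<or> cardSuc (card_of K) \<le>o |Func (UNIV :: nat set) K|"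
    using ordLeq_total[OF card_of_Well_order] by blast
  hence "cardSuc (card_of K) \<le>o |T| \<and> |T| \<le>o |Pow K|"
  proof
    assume "|Func (UNIV :: nat set) K| \<le>o cardSuc (card_of K)"
    hence T: "|T| =o cardSuc (card_of K)" using suc by blast
    show ?thesis
      using ordIso_symmetric[OF T] ordIso_ordLeq_trans[OF T suc_le_Pow] by (simp add: ordIso_iff_ordLeq)
  next
    assume le: "cardSuc (card_of K) \<le>o |Func (UNIV :: nat set) K|"
    hence T: "|T| =o |Func (UNIV :: nat set) K|" using func by blast
    show ?thesis
      using ordLeq_ordIso_trans[OF le ordIso_symmetric[OF T]]
        ordIso_ordLeq_trans[OF T card_of_Func_nat_le_Pow[OF K]] by blast
  qed
  thus "|K| <o |T|" "|T| \<le>o |Pow K|"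
    using ordLess_ordLeq_trans[OF cardSuc_greater[OF cK]] by blast+
qed

lemma card_of_lists_Times_bool:
  assumes "infinite K"
  shows "|lists (K \<times> (UNIV :: bool set))| =o |K|"
proof -
  have "|(UNIV :: bool set)| \<le>o |(UNIV :: nat set)|"
    unfolding card_of_ordLeq[symmetric] by (rule exI[of _ "\<lambda>b. if b then 1 else 0"]) (auto simp: inj_on_def)
  also have "|(UNIV :: nat set)| \<le>o |K|" using assms infinite_iff_card_of_nat by blast
  finally have "|(UNIV :: bool set)| \<le>o |K|" .
  hence "|K \<times> (UNIV :: bool set)| =o |K|" using card_of_Times_infinite[OF assms] by blast
  moreover have "infinite (K \<times> (UNIV :: bool set))" using assms finite_cartesian_productD1 by blast
  ultimately have "|lists (K \<times> (UNIV :: bool set))| \<le>o |K|"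
    using ordLeq_ordIso_trans[OF card_of_lists_le_infinite] by blast
  moreover have "|K| \<le>o |lists (K \<times> (UNIV :: bool set))|"
    unfolding card_of_ordLeq[symmetric]
    by (rule exI[of _ "\<lambda>k. [(k, True)]"]) (auto simp: inj_on_def)
  ultimately show ?thesis by (simp add: ordIso_iff_ordLeq)
qed

lemma card_of_Diff_ordLess_infinite:
  assumes T: "infinite T" and R: "|R| <o |T|"
  shows "|T - R| =o |T|"
proof -
  have "\<not> |T - R| <o |T|"
  proof
    assume "|T - R| <o |T|"
    hence "|R \<union> (T - R)| <o |T|" using card_of_Un_ordLess_infinite[OF T R] by blast
    moreover have "|T| \<le>o |R \<union> (T - R)|" by (rule card_of_mono1) blast
    ultimately show False using not_ordLess_ordLeq by blast
  qed
  hence "|T| \<le>o |T - R|" using not_ordLess_iff_ordLeq[OF card_of_Well_order card_of_Well_order] by blast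
  moreover have "|T - R| \<le>o |T|" by (rule card_of_mono1) blast
  ultimately show ?thesis by (simp add: ordIso_iff_ordLeq)
qed

section \<open>Density\<close>

lemma card_le_card_dense_subset:
  assumes V: "V \<subseteq> l1 T" and A: "A \<subseteq> T" "\<forall>a\<in>A. unit_vec a \<in> V"
    and D: "l1_dense_in T D V"
  shows "|A| \<le>o |D|"
proof -
  have DV: "D \<subseteq> V" using D by (auto simp: l1_dense_in_def)
  have "\<forall>a\<in>A. \<exists>d\<in>D. l1norm T (\<lambda>i. unit_vec a i - d i) < 1"
    using D A unfolding l1_dense_in_def by (meson zero_less_one)
  then obtain f where f: "\<And>a. a \<in> A \<Longrightarrow> f a \<in> D \<and> l1norm T (\<lambda>i. unit_vec a i - f a i) < 1"
    by metis
  \<comment> \<open>unit vectors are 2 apart, so no element of \<open>D\<close> is within distance 1 of two of them\<close>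
  have "inj_on f A"
  proof (rule inj_onI, rule ccontr)
    fix a b assume ab: "a \<in> A" "b \<in> A" "f a = f b" "a \<noteq> b"
    have l: "unit_vec a \<in> l1 T" "unit_vec b \<in> l1 T" "f a \<in> l1 T"
      using ab A f[of a] DV V by (auto intro: unit_vec_l1)
    have "l1norm T (\<lambda>i. unit_vec a i - unit_vec b i)
          \<le> l1norm T (\<lambda>i. unit_vec a i - f a i) + l1norm T (\<lambda>i. f b i - unit_vec b i)"
      using l1norm_diff_triangle[OF l(1,3,2)] ab(3) by simp
    also have "\<dots> < 2"
      using f[OF ab(1)] f[OF ab(2)] l1norm_diff_commute[of T "f b" "unit_vec b"] by simp
    finally show False using l1norm_unit_vec_diff[of a T b] ab A by auto
  qed
  moreover have "f ` A \<subseteq> D" using f by auto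
  ultimately show ?thesis unfolding card_of_ordLeq[symmetric] by blast
qed

lemma dense_subset_card_le:
  assumes V: "V \<subseteq> l1 T" and D0: "D0 \<subseteq> l1 T"
    and approx: "\<forall>v\<in>V. \<forall>e>0. \<exists>d\<in>D0. l1norm T (\<lambda>i. v i - d i) < e"
    and A: "infinite A" "|D0| \<le>o |A|"
  obtains D where "l1_dense_in T D V" "|D| \<le>o |A|"
proof -
  \<comment> \<open>\<open>D0\<close> need not lie in \<open>V\<close>: replace each \<open>d \<in> D0\<close> by a point of \<open>V\<close> within \<open>1/(n+1)\<close> of it, for every \<open>n\<close>\<close>
  define I where "I = {(d, n). d \<in> D0 \<and> (\<exists>v\<in>V. l1norm T (\<lambda>i. v i - d i) < 1 / real (Suc n))}"
  define g where "g = (\<lambda>(d, n::nat). SOME v. v \<in> V \<and> l1norm T (\<lambda>i. v i - d i) < 1 / real (Suc n))"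
  have g: "g (d, n) \<in> V \<and> l1norm T (\<lambda>i. g (d, n) i - d i) < 1 / real (Suc n)" if dn: "(d, n) \<in> I" for d n
  proof -
    obtain v where "v \<in> V \<and> l1norm T (\<lambda>i. v i - d i) < 1 / real (Suc n)" using dn unfolding I_def by auto
    from someI[of "\<lambda>v. v \<in> V \<and> l1norm T (\<lambda>i. v i - d i) < 1 / real (Suc n)", OF this]
    show ?thesis unfolding g_def split_conv .
  qed
  have "\<exists>d'\<in>g ` I. l1norm T (\<lambda>i. v i - d' i) < e" if v: "v \<in> V" and e: "e > 0" for v e
  proof -
    obtain n :: nat where n: "inverse (real (Suc n)) < e / 2"
      using reals_Archimedean[of "e/2"] e by auto
    have "1 / real (Suc n) > 0" by simp
    then obtain d where d: "d \<in> D0" "l1norm T (\<lambda>i. v i - d i) < 1 / real (Suc n)"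
      using approx v by blast
    have dn: "(d, n) \<in> I" using d v unfolding I_def by auto
    have l: "v \<in> l1 T" "d \<in> l1 T" "g (d, n) \<in> l1 T" using v d(1) D0 V g[OF dn] by auto
    have "l1norm T (\<lambda>i. v i - g (d, n) i) \<le> l1norm T (\<lambda>i. v i - d i) + l1norm T (\<lambda>i. d i - g (d, n) i)"
      by (rule l1norm_diff_triangle[OF l])
    also have "l1norm T (\<lambda>i. d i - g (d, n) i) = l1norm T (\<lambda>i. g (d, n) i - d i)"
      by (rule l1norm_diff_commute)
    finally have "l1norm T (\<lambda>i. v i - g (d, n) i) < 2 * inverse (real (Suc n))"
      using d(2) g[OF dn] by (simp add: divide_inverse)
    moreover have "g (d, n) \<in> g ` I" using dn by (rule imageI)
    ultimately show ?thesis using n by (intro bexI[of _ "g (d, n)"]) auto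
  qed
  moreover have "g ` I \<subseteq> V" using g by auto
  ultimately have "l1_dense_in T (g ` I) V" unfolding l1_dense_in_def by blast
  moreover have "|g ` I| \<le>o |A|"
  proof -
    have "|g ` I| \<le>o |I|" by (rule card_of_image)
    also have "|I| \<le>o |D0 \<times> (UNIV :: nat set)|" by (rule card_of_mono1) (auto simp: I_def)
    also have "|D0 \<times> (UNIV :: nat set)| \<le>o |A \<times> (UNIV :: nat set)|"
      by (rule card_of_Times_mono1[OF A(2)])
    also have "|A \<times> (UNIV :: nat set)| \<le>o |A \<times> A|"
      by (rule card_of_Times_mono2) (use A(1) infinite_iff_card_of_nat in blast)
    also have "|A \<times> A| =o |A|" by (rule card_of_Times_same_infinite[OF A(1)])
    finally show ?thesis .
  qed
  ultimately show thesis by (rule that)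
qed

definition complex_rats :: "complex set" where
  "complex_rats = (\<lambda>(p, q). Complex (of_rat p) (of_rat q)) ` UNIV"

lemma countable_complex_rats: "countable complex_rats"
  unfolding complex_rats_def by simp

lemma complex_rats_dense:
  assumes "e > 0"
  obtains q where "q \<in> complex_rats" "norm (z - q) < e"
proof -
  obtain p1 where p1: "Re z - e/2 < of_rat p1" "of_rat p1 < Re z + e/2"
    using of_rat_dense[of "Re z - e/2" "Re z + e/2"] assms by auto
  obtain p2 where p2: "Im z - e/2 < of_rat p2" "of_rat p2 < Im z + e/2"
    using of_rat_dense[of "Im z - e/2" "Im z + e/2"] assms by auto
  have "norm (z - Complex (of_rat p1) (of_rat p2))
        \<le> \<bar>Re (z - Complex (of_rat p1) (of_rat p2))\<bar> + \<bar>Im (z - Complex (of_rat p1) (of_rat p2))\<bar>"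
    by (rule cmod_le)
  also have "\<dots> < e" using p1 p2 by simp
  finally show thesis by (rule that[rotated]) (auto simp: complex_rats_def)
qed

definition vec_of_alist :: "('t \<times> complex) list \<Rightarrow> 't \<Rightarrow> complex" where
  "vec_of_alist L i = (case map_of L i of None \<Rightarrow> 0 | Some q \<Rightarrow> q)"

definition rational_vecs :: "'t set \<Rightarrow> ('t \<Rightarrow> complex) set" where
  "rational_vecs A = vec_of_alist ` lists (A \<times> complex_rats)"

lemma card_of_rational_vecs_le:
  assumes "infinite A"
  shows "|rational_vecs A| \<le>o |A|"
proof -
  have "complex_rats \<noteq> {}" by (simp add: complex_rats_def)
  hence "infinite (A \<times> complex_rats)"
    using assms finite_cartesian_productD1 by blast
  have "|rational_vecs A| \<le>o |lists (A \<times> complex_rats)|"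
    unfolding rational_vecs_def by (rule card_of_image)
  also have "|lists (A \<times> complex_rats)| \<le>o |A \<times> complex_rats|"
    by (rule card_of_lists_le_infinite) fact
  also have "|A \<times> complex_rats| \<le>o |A \<times> A|"
  proof (rule card_of_Times_mono2)
    obtain f :: "complex \<Rightarrow> nat" where "inj_on f complex_rats"
      using countable_complex_rats unfolding countable_def by blast
    hence "|complex_rats| \<le>o |UNIV :: nat set|"
      unfolding card_of_ordLeq[symmetric] by blast
    also have "|UNIV :: nat set| \<le>o |A|"
      using assms infinite_iff_card_of_nat by blast
    finally show "|complex_rats| \<le>o |A|" .
  qed
  also have "|A \<times> A| =o |A|" by (rule card_of_Times_same_infinite[OF assms])
  finally show ?thesis .
qed

lemma vec_of_alist_nonzero: "vec_of_alist L i \<noteq> 0 \<Longrightarrow> i \<in> fst ` set L"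
  unfolding vec_of_alist_def by (metis map_of_eq_None_iff option.case(1))

lemma rational_vecs_l1:
  assumes "A \<subseteq> T"
  shows "rational_vecs A \<subseteq> l1 T"
proof
  fix d assume "d \<in> rational_vecs A"
  then obtain L where L: "L \<in> lists (A \<times> complex_rats)" and d: "d = vec_of_alist L"
    unfolding rational_vecs_def by blast
  have supp: "d i = 0" if "i \<notin> fst ` set L" for i
    using that vec_of_alist_nonzero unfolding d by metis
  have "fst ` set L \<subseteq> T" using L assms by auto
  hence "\<forall>i. i \<notin> T \<longrightarrow> d i = 0" using supp by blast
  moreover have "(\<lambda>i. norm (d i)) summable_on T"
  proof (rule finite_nonzero_values_imp_summable_on)
    show "finite {i \<in> T. norm (d i) \<noteq> 0}"
      by (rule finite_subset[of _ "fst ` set L"]) (use supp in auto)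
  qed
  ultimately show "d \<in> l1 T" unfolding l1_def by blast
qed

lemma rational_vecs_approx:
  assumes x: "x \<in> l1 T" "\<forall>i. i \<notin> A \<longrightarrow> x i = 0" and A: "A \<subseteq> T" and e: "e > 0"
  obtains d where "d \<in> rational_vecs A" "l1norm T (\<lambda>i. x i - d i) < e"
proof -
  obtain F where F: "finite F" "F \<subseteq> A" "(\<Sum>\<^sub>\<infinity>i\<in>A - F. norm (x i)) \<le> e/4"
    using infsum_tail_le[OF l1_summable_norm_on[OF x(1) A], of "e/4"] e by auto
  define \<delta> where "\<delta> = e / (4 * (real (card F) + 1))"
  have "\<delta> > 0" using e by (simp add: \<delta>_def)
  hence "\<forall>i. \<exists>q. q \<in> complex_rats \<and> norm (x i - q) < \<delta>"
    using complex_rats_dense by metis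
  then obtain q where q: "\<And>i. q i \<in> complex_rats \<and> norm (x i - q i) < \<delta>"
    by metis
  obtain xs where xs: "set xs = F" using finite_list[OF F(1)] by blast
  define d where "d = vec_of_alist (map (\<lambda>i. (i, q i)) xs)"
  have "map (\<lambda>i. (i, q i)) xs \<in> lists (A \<times> complex_rats)" using q xs F(2) by auto
  hence dA: "d \<in> rational_vecs A" unfolding d_def rational_vecs_def by blast
  have d: "d i = (if i \<in> F then q i else 0)" for i
    unfolding d_def vec_of_alist_def map_of_map_restrict xs by (simp add: restrict_map_def)
  have "l1norm T (\<lambda>i. x i - d i) = (\<Sum>\<^sub>\<infinity>i\<in>F \<union> (T - F). norm (x i - d i))"
    unfolding l1norm_def using F(2) A by (simp add: Un_absorb1)
  also have "\<dots> = (\<Sum>i\<in>F. norm (x i - q i)) + (\<Sum>\<^sub>\<infinity>i\<in>T - F. norm (x i - d i))"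
    using F(1) l1_diff[OF x(1) rational_vecs_l1[OF A, THEN subsetD, OF dA]]
    by (subst infsum_Un_disjoint) (auto simp: d intro: l1_summable_norm_on)
  also have "(\<Sum>\<^sub>\<infinity>i\<in>T - F. norm (x i - d i)) = (\<Sum>\<^sub>\<infinity>i\<in>A - F. norm (x i))"
    by (rule infsum_cong_neutral) (use x(2) A in \<open>auto simp: d\<close>)
  also have "(\<Sum>i\<in>F. norm (x i - q i)) \<le> real (card F) * \<delta>"
    using sum_mono[of F "\<lambda>i. norm (x i - q i)" "\<lambda>_. \<delta>"] q by (simp add: less_imp_le)
  also have "real (card F) * \<delta> \<le> e / 4"
    using e by (simp add: \<delta>_def field_simps)
  finally show thesis using F(3) e dA by (intro that) auto
qed

lemma has_density_of_unit_vecs: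
  assumes V: "V \<subseteq> l1 T" and A: "A \<subseteq> T" "\<forall>a\<in>A. unit_vec a \<in> V" "infinite A"
    and B: "B \<subseteq> T" "\<forall>v\<in>V. \<forall>i. i \<notin> B \<longrightarrow> v i = 0" "|B| \<le>o |A|"
    and AX: "|A| =o |X|"
  shows "has_density T V X"
proof -
  have "A \<subseteq> B"
  proof
    fix a assume "a \<in> A"
    hence "unit_vec a a \<noteq> 0" "unit_vec a \<in> V" using A(2) by (auto simp: unit_vec_def)
    thus "a \<in> B" using B(2) by blast
  qed
  hence "infinite B" using A(3) finite_subset by blast
  have approx: "\<forall>v\<in>V. \<forall>e>0. \<exists>d\<in>rational_vecs B. l1norm T (\<lambda>i. v i - d i) < e"
  proof (intro ballI allI impI)
    fix v and e :: real assume "v \<in> V" "e > 0"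
    then obtain d where "d \<in> rational_vecs B" "l1norm T (\<lambda>i. v i - d i) < e"
      using rational_vecs_approx[of v T B e] V B(1,2) by blast
    thus "\<exists>d\<in>rational_vecs B. l1norm T (\<lambda>i. v i - d i) < e" by blast
  qed
  have "|rational_vecs B| \<le>o |A|"
    using card_of_rational_vecs_le[OF \<open>infinite B\<close>] B(3) by (rule ordLeq_transitive)
  then obtain D where D: "l1_dense_in T D V" "|D| \<le>o |A|"
    using dense_subset_card_le[OF V rational_vecs_l1[OF B(1)] approx A(3)] by blast
  have lower: "|X| \<le>o |D'|" if "l1_dense_in T D' V" for D'
    using ordIso_ordLeq_trans[OF ordIso_symmetric[OF AX] card_le_card_dense_subset[OF V A(1,2) that]] .
  have "|D| =o |A|"
    using D(2) card_le_card_dense_subset[OF V A(1,2) D(1)] by (simp add: ordIso_iff_ordLeq)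
  hence "|D| =o |X|" using AX by (rule ordIso_transitive)
  thus ?thesis unfolding has_density_def using D(1) lower by blast
qed

section \<open>Quadratic forms given by bounded kernels\<close>

definition kernel_apply :: "('t \<Rightarrow> 't \<Rightarrow> complex) \<Rightarrow> 't set \<Rightarrow> ('t \<Rightarrow> complex) \<Rightarrow> 't \<Rightarrow> complex" where
  "kernel_apply M S y r = (\<Sum>\<^sub>\<infinity>s\<in>S. M r s * y s)"

definition kernel_form ::
  "('t \<Rightarrow> 't \<Rightarrow> complex) \<Rightarrow> 't set \<Rightarrow> 't set \<Rightarrow> ('t \<Rightarrow> complex) \<Rightarrow> ('t \<Rightarrow> complex) \<Rightarrow> complex" where
  "kernel_form M R S x y = (\<Sum>\<^sub>\<infinity>r\<in>R. x r * kernel_apply M S y r)"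

locale bounded_kernel =
  fixes M :: "'t \<Rightarrow> 't \<Rightarrow> complex" and R S T :: "'t set"
  assumes norm_kernel_le: "\<And>r s. norm (M r s) \<le> 1" and R_subset: "R \<subseteq> T" and S_subset: "S \<subseteq> T"
begin

lemma norm_kernel_mult_le: "norm (M r s * c) \<le> norm c"
  unfolding norm_mult by (rule mult_left_le_one_le[OF norm_ge_zero norm_ge_zero norm_kernel_le])

lemma kernel_apply_abs_summable: "y \<in> l1 T \<Longrightarrow> (\<lambda>s. norm (M r s * y s)) summable_on S"
  by (rule summable_on_comparison_test[OF l1_summable_norm_on[OF _ S_subset]])
     (auto intro: norm_kernel_mult_le)

lemma kernel_apply_summable: "y \<in> l1 T \<Longrightarrow> (\<lambda>s. M r s * y s) summable_on S"
  by (rule abs_summable_summable[OF kernel_apply_abs_summable])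

lemma norm_kernel_apply_le:
  assumes y: "y \<in> l1 T"
  shows "norm (kernel_apply M S y r) \<le> l1norm T y"
proof -
  have "norm (kernel_apply M S y r) \<le> (\<Sum>\<^sub>\<infinity>s\<in>S. norm (M r s * y s))"
    unfolding kernel_apply_def by (rule norm_infsum_bound[OF kernel_apply_abs_summable[OF y]])
  also have "\<dots> \<le> (\<Sum>\<^sub>\<infinity>s\<in>S. norm (y s))"
    by (rule infsum_mono[OF kernel_apply_abs_summable[OF y] l1_summable_norm_on[OF y S_subset]])
       (rule norm_kernel_mult_le)
  also have "\<dots> \<le> l1norm T y" by (rule infsum_norm_le_l1norm[OF y S_subset])
  finally show ?thesis .
qed

lemma kernel_apply_lincomb:
  assumes "y \<in> l1 T" "z \<in> l1 T"
  shows "kernel_apply M S (\<lambda>i. a * y i + b * z i) r = a * kernel_apply M S y r + b * kernel_apply M S z r"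
proof -
  have "kernel_apply M S (\<lambda>i. a * y i + b * z i) r = (\<Sum>\<^sub>\<infinity>s\<in>S. a * (M r s * y s) + b * (M r s * z s))"
    unfolding kernel_apply_def by (simp add: algebra_simps)
  also have "\<dots> = (\<Sum>\<^sub>\<infinity>s\<in>S. a * (M r s * y s)) + (\<Sum>\<^sub>\<infinity>s\<in>S. b * (M r s * z s))"
    by (rule infsum_add) (intro summable_on_cmult_right kernel_apply_summable assms)+
  also have "\<dots> = a * kernel_apply M S y r + b * kernel_apply M S z r"
    unfolding kernel_apply_def by (simp add: infsum_cmult_right')
  finally show ?thesis .
qed

lemma norm_mult_kernel_apply_le:
  fixes x :: "'t \<Rightarrow> complex"
  assumes "y \<in> l1 T"
  shows "norm (x r * kernel_apply M S y r) \<le> l1norm T y * norm (x r)"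
  unfolding norm_mult mult.commute[of _ "norm (x r)"]
  by (rule mult_left_mono[OF norm_kernel_apply_le[OF assms] norm_ge_zero])

lemma kernel_form_abs_summable:
  assumes "x \<in> l1 T" "y \<in> l1 T"
  shows "(\<lambda>r. norm (x r * kernel_apply M S y r)) summable_on R"
  by (rule summable_on_comparison_test[OF summable_on_cmult_right[OF l1_summable_norm_on[OF assms(1) R_subset]]])
     (auto intro: norm_mult_kernel_apply_le[OF assms(2)])

lemma kernel_form_summable:
  "x \<in> l1 T \<Longrightarrow> y \<in> l1 T \<Longrightarrow> (\<lambda>r. x r * kernel_apply M S y r) summable_on R"
  by (rule abs_summable_summable[OF kernel_form_abs_summable])

lemma norm_kernel_form_le:
  assumes x: "x \<in> l1 T" and y: "y \<in> l1 T"
  shows "norm (kernel_form M R S x y) \<le> 1 * l1norm T x * l1norm T y"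
proof -
  have "norm (kernel_form M R S x y) \<le> (\<Sum>\<^sub>\<infinity>r\<in>R. norm (x r * kernel_apply M S y r))"
    unfolding kernel_form_def by (rule norm_infsum_bound[OF kernel_form_abs_summable[OF x y]])
  also have "\<dots> \<le> (\<Sum>\<^sub>\<infinity>r\<in>R. l1norm T y * norm (x r))"
    by (rule infsum_mono[OF kernel_form_abs_summable[OF x y]
          summable_on_cmult_right[OF l1_summable_norm_on[OF x R_subset]]])
       (rule norm_mult_kernel_apply_le[OF y])
  also have "\<dots> = l1norm T y * (\<Sum>\<^sub>\<infinity>r\<in>R. norm (x r))" by (rule infsum_cmult_right')
  also have "\<dots> \<le> l1norm T y * l1norm T x"
    by (rule mult_left_mono[OF infsum_norm_le_l1norm[OF x R_subset] l1norm_nonneg])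
  finally show ?thesis by (simp add: mult.commute)
qed

lemma kernel_form_lincomb_left:
  assumes "x \<in> l1 T" "y \<in> l1 T" "z \<in> l1 T"
  shows "kernel_form M R S (\<lambda>i. a * x i + b * y i) z = a * kernel_form M R S x z + b * kernel_form M R S y z"
proof -
  have "kernel_form M R S (\<lambda>i. a * x i + b * y i) z
        = (\<Sum>\<^sub>\<infinity>r\<in>R. a * (x r * kernel_apply M S z r) + b * (y r * kernel_apply M S z r))"
    unfolding kernel_form_def by (simp add: algebra_simps)
  also have "\<dots> = (\<Sum>\<^sub>\<infinity>r\<in>R. a * (x r * kernel_apply M S z r)) + (\<Sum>\<^sub>\<infinity>r\<in>R. b * (y r * kernel_apply M S z r))"
    by (rule infsum_add) (intro summable_on_cmult_right kernel_form_summable assms)+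
  also have "\<dots> = a * kernel_form M R S x z + b * kernel_form M R S y z"
    unfolding kernel_form_def by (simp add: infsum_cmult_right')
  finally show ?thesis .
qed

lemma kernel_form_lincomb_right:
  assumes "x \<in> l1 T" "y \<in> l1 T" "z \<in> l1 T"
  shows "kernel_form M R S z (\<lambda>i. a * x i + b * y i) = a * kernel_form M R S z x + b * kernel_form M R S z y"
proof -
  have "kernel_form M R S z (\<lambda>i. a * x i + b * y i)
        = (\<Sum>\<^sub>\<infinity>r\<in>R. a * (z r * kernel_apply M S x r) + b * (z r * kernel_apply M S y r))"
    unfolding kernel_form_def kernel_apply_lincomb[OF assms(1,2)] by (simp add: algebra_simps)
  also have "\<dots> = (\<Sum>\<^sub>\<infinity>r\<in>R. a * (z r * kernel_apply M S x r)) + (\<Sum>\<^sub>\<infinity>r\<in>R. b * (z r * kernel_apply M S y r))"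
    by (rule infsum_add) (intro summable_on_cmult_right kernel_form_summable assms)+
  also have "\<dots> = a * kernel_form M R S z x + b * kernel_form M R S z y"
    unfolding kernel_form_def by (simp add: infsum_cmult_right')
  finally show ?thesis .
qed

lemma kernel_form_unit_vec_add:
  assumes r: "r \<in> R" "r \<notin> S" and w: "w \<in> l1 T"
  shows "kernel_form M R S (\<lambda>i. unit_vec r i + w i) (\<lambda>i. unit_vec r i + w i)
         = kernel_apply M S w r + kernel_form M R S w w"
proof -
  have e: "unit_vec r \<in> l1 T" using r R_subset by (auto intro: unit_vec_l1)
  have u: "(\<lambda>i. unit_vec r i + w i) \<in> l1 T" using l1_lincomb[OF e w, of 1 1] by simp
  have apply_eq: "kernel_apply M S (\<lambda>i. unit_vec r i + w i) = kernel_apply M S w"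
  proof
    fix r'
    have "kernel_apply M S (unit_vec r) r' = 0"
      unfolding kernel_apply_def using r(2) by (intro infsum_0) (auto simp: unit_vec_def)
    thus "kernel_apply M S (\<lambda>i. unit_vec r i + w i) r' = kernel_apply M S w r'"
      using kernel_apply_lincomb[OF e w, of 1 1 r'] by simp
  qed
  have "kernel_form M R S (unit_vec r) (\<lambda>i. unit_vec r i + w i) = kernel_apply M S w r"
  proof -
    have "kernel_form M R S (unit_vec r) (\<lambda>i. unit_vec r i + w i)
          = (\<Sum>\<^sub>\<infinity>r'\<in>{r}. unit_vec r r' * kernel_apply M S w r')"
      unfolding kernel_form_def apply_eq by (rule infsum_cong_neutral) (use r in \<open>auto simp: unit_vec_def\<close>)
    thus ?thesis by (simp add: unit_vec_def)
  qed
  moreover have "kernel_form M R S w (\<lambda>i. unit_vec r i + w i) = kernel_form M R S w w"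
    unfolding kernel_form_def apply_eq ..
  ultimately show ?thesis
    using kernel_form_lincomb_left[OF e w u, of 1 1] by simp
qed

lemma cont_quad_poly_kernel_form: "cont_quad_poly T (\<lambda>x. kernel_form M R S x x)"
  unfolding cont_quad_poly_def
  by (intro exI[of _ "kernel_form M R S"] exI[of _ 1])
     (use kernel_form_lincomb_left kernel_form_lincomb_right norm_kernel_form_le in auto)

end

section \<open>Zero subspaces\<close>

definition vanishing_on :: "'t set \<Rightarrow> 't set \<Rightarrow> ('t \<Rightarrow> complex) set" where
  "vanishing_on T A = {x \<in> l1 T. \<forall>a\<in>A. x a = 0}"

lemma l1_subspace_vanishing_on: "l1_subspace T (vanishing_on T A)"
  unfolding l1_subspace_def vanishing_on_def using l1_zero l1_lincomb by auto

lemma unit_vec_vanishing_on: "a \<in> T \<Longrightarrow> a \<notin> A \<Longrightarrow> unit_vec a \<in> vanishing_on T A"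
  unfolding vanishing_on_def by (auto simp: unit_vec_l1) (auto simp: unit_vec_def)

lemma zero_subspace_Union_chain:
  assumes "C \<noteq> {}" "subset.chain {U. zero_subspace T P U} C"
  shows "zero_subspace T P (\<Union>C)"
proof -
  have zs: "\<And>U. U \<in> C \<Longrightarrow> zero_subspace T P U" and ch: "\<forall>X\<in>C. \<forall>Y\<in>C. X \<subseteq> Y \<or> Y \<subseteq> X"
    using assms(2) unfolding subset_chain_def by auto
  obtain U0 where U0: "U0 \<in> C" using assms(1) by blast
  have "l1_subspace T (\<Union>C)"
    unfolding l1_subspace_def
  proof (intro conjI ballI allI)
    show "\<Union>C \<subseteq> l1 T" using zs unfolding zero_subspace_def l1_subspace_def by blast
    show "(\<lambda>i. 0) \<in> \<Union>C" using zs[OF U0] U0 unfolding zero_subspace_def l1_subspace_def by blast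
  next
    fix x y a b assume "x \<in> \<Union>C" "y \<in> \<Union>C"
    then obtain X Y where XY: "X \<in> C" "Y \<in> C" "x \<in> X" "y \<in> Y" by blast
    then obtain Z where "Z \<in> C" "x \<in> Z" "y \<in> Z" using ch by blast
    thus "(\<lambda>i. a * x i + b * y i) \<in> \<Union>C"
      using zs unfolding zero_subspace_def l1_subspace_def by blast
  qed
  thus ?thesis using zs unfolding zero_subspace_def by blast
qed

lemma zero_subspace_extends_to_maximal:
  assumes "zero_subspace T P V"
  obtains W where "maximal_zero_subspace T P W" "V \<subseteq> W"
proof -
  define \<Z> where "\<Z> = {U. zero_subspace T P U \<and> V \<subseteq> U}"
  have "\<exists>W\<in>\<Z>. \<forall>X\<in>\<Z>. W \<subseteq> X \<longrightarrow> X = W"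
  proof (rule subset_Zorn_nonempty)
    show "\<Z> \<noteq> {}" using assms unfolding \<Z>_def by blast
  next
    fix C assume C: "C \<noteq> {}" "subset.chain \<Z> C"
    hence "subset.chain {U. zero_subspace T P U} C" unfolding subset_chain_def \<Z>_def by blast
    hence "zero_subspace T P (\<Union>C)" by (rule zero_subspace_Union_chain[OF C(1)])
    moreover have "V \<subseteq> \<Union>C" using C unfolding subset_chain_def \<Z>_def by blast
    ultimately show "\<Union>C \<in> \<Z>" unfolding \<Z>_def by blast
  qed
  then obtain W where W: "W \<in> \<Z>" "\<And>X. X \<in> \<Z> \<Longrightarrow> W \<subseteq> X \<Longrightarrow> X = W" by blast
  have "maximal_zero_subspace T P W"
    unfolding maximal_zero_subspace_def
  proof (intro conjI allI impI)
    show "zero_subspace T P W" using W(1) unfolding \<Z>_def by blast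
    fix X assume X: "zero_subspace T P X \<and> W \<subseteq> X"
    hence "X \<in> \<Z>" using W(1) unfolding \<Z>_def by blast
    thus "X = W" using W(2) X by blast
  qed
  thus thesis using W(1) unfolding \<Z>_def by (intro that) auto
qed

section \<open>Separating points of \<open>2\<^sup>K\<close> by cylinders\<close>

text \<open>A list \<open>L\<close> of pairs \<open>(k, b)\<close> prescribes membership of finitely many points of \<open>K\<close>;
  the sets matching \<open>L\<close> form a basic clopen cylinder in \<open>2\<^sup>K\<close>.\<close>

definition matches :: "('k \<times> bool) list \<Rightarrow> 'k set \<Rightarrow> bool" where
  "matches L X \<longleftrightarrow> (\<forall>(k, b)\<in>set L. (k \<in> X) = b)"

lemma exists_pattern_separating:
  assumes "X0 \<subseteq> K" "finite \<X>" "\<forall>X\<in>\<X>. X \<subseteq> K \<and> X \<noteq> X0"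
  obtains L where "L \<in> lists (K \<times> UNIV)" "matches L X0" "\<forall>X\<in>\<X>. \<not> matches L X"
proof -
  have "\<forall>X\<in>\<X>. \<exists>k. k \<in> K \<and> \<not> ((k \<in> X) \<longleftrightarrow> (k \<in> X0))"
  proof
    fix X assume "X \<in> \<X>"
    hence "X \<noteq> X0" "X \<subseteq> K" using assms(3) by auto
    then obtain k where "\<not> ((k \<in> X) \<longleftrightarrow> (k \<in> X0))" by blast
    moreover have "k \<in> K" using calculation \<open>X \<subseteq> K\<close> assms(1) by blast
    ultimately show "\<exists>k. k \<in> K \<and> \<not> ((k \<in> X) \<longleftrightarrow> (k \<in> X0))" by blast
  qed
  then obtain w where w: "\<forall>X\<in>\<X>. w X \<in> K \<and> \<not> ((w X \<in> X) \<longleftrightarrow> (w X \<in> X0))"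
    by (rule bchoice[THEN exE]) blast
  from finite_list[OF finite_imageI[OF assms(2)]] obtain ks where ks: "set ks = w ` \<X>" ..
  define L where "L = map (\<lambda>k. (k, k \<in> X0)) ks"
  show thesis
  proof (rule that)
    show "L \<in> lists (K \<times> UNIV)" using w ks unfolding L_def by auto
    show "matches L X0" unfolding matches_def L_def by auto
    show "\<forall>X\<in>\<X>. \<not> matches L X"
    proof
      fix X assume X: "X \<in> \<X>"
      hence "(w X, w X \<in> X0) \<in> set L" using ks unfolding L_def by simp
      thus "\<not> matches L X" using w X unfolding matches_def by blast
    qed
  qed
qed

lemma pattern_sums_zero_imp_zero:
  fixes x :: "'t \<Rightarrow> complex" and \<iota> :: "'t \<Rightarrow> 'k set"
  assumes inj: "inj_on \<iota> S" and sub: "\<forall>s\<in>S. \<iota> s \<subseteq> K"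
    and sx: "(\<lambda>s. norm (x s)) summable_on S"
    and sums: "\<forall>L\<in>lists (K \<times> UNIV). (\<Sum>\<^sub>\<infinity>s\<in>S. (if matches L (\<iota> s) then 1 else 0) * x s) = 0"
    and s0: "s0 \<in> S"
  shows "x s0 = 0"
proof (rule ccontr)
  \<comment> \<open>take a finite \<open>C \<ni> s0\<close> outside of which \<open>x\<close> has mass \<open>\<le> |x s0|/2\<close>, and a cylinder containing
     \<open>\<iota> s0\<close> but no \<open>\<iota> t\<close> for \<open>t \<in> C - {s0}\<close>: its sum is \<open>x s0\<close> plus a tail too small to cancel it\<close>
  assume "x s0 \<noteq> 0"
  define m where "m = norm (x s0)"
  have m: "m > 0" using \<open>x s0 \<noteq> 0\<close> by (simp add: m_def)
  obtain F where F: "finite F" "F \<subseteq> S" "(\<Sum>\<^sub>\<infinity>s\<in>S - F. norm (x s)) \<le> m/2"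
    using infsum_tail_le[OF sx, of "m/2"] m by auto
  define C where "C = insert s0 F"
  have C: "finite C" "C \<subseteq> S" "s0 \<in> C" using F s0 by (auto simp: C_def)
  have sSC: "(\<lambda>s. norm (x s)) summable_on (S - C)" by (rule summable_on_subset_banach[OF sx]) auto
  have tail: "(\<Sum>\<^sub>\<infinity>s\<in>S - C. norm (x s)) \<le> m/2"
  proof -
    have "(\<Sum>\<^sub>\<infinity>s\<in>S - C. norm (x s)) \<le> (\<Sum>\<^sub>\<infinity>s\<in>S - F. norm (x s))"
      by (rule infsum_mono_neutral[OF sSC summable_on_subset_banach[OF sx]]) (auto simp: C_def)
    thus ?thesis using F(3) by linarith
  qed
  have "\<forall>X\<in>\<iota> ` (C - {s0}). X \<subseteq> K \<and> X \<noteq> \<iota> s0"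
    using inj C(2) s0 sub unfolding inj_on_def by blast
  then obtain L where L: "L \<in> lists (K \<times> UNIV)" "matches L (\<iota> s0)"
    "\<forall>t\<in>C - {s0}. \<not> matches L (\<iota> t)"
    using exists_pattern_separating[of "\<iota> s0" K "\<iota> ` (C - {s0})"] sub s0 C(1) by auto
  define ch where "ch s = (if matches L (\<iota> s) then 1 else 0 :: complex)" for s
  have nch: "norm (ch s * x s) \<le> norm (x s)" for s by (simp add: ch_def norm_mult)
  have sch: "(\<lambda>s. norm (ch s * x s)) summable_on (S - C)"
    by (rule summable_on_comparison_test[OF sSC]) (auto intro: nch)
  have "0 = (\<Sum>\<^sub>\<infinity>s\<in>S. ch s * x s)" using sums L(1) unfolding ch_def by auto
  also have "\<dots> = (\<Sum>\<^sub>\<infinity>s\<in>C \<union> (S - C). ch s * x s)" using C(2) by (simp add: Un_absorb1)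
  also have "\<dots> = (\<Sum>s\<in>C. ch s * x s) + (\<Sum>\<^sub>\<infinity>s\<in>S - C. ch s * x s)"
    using C(1) abs_summable_summable[OF sch] by (subst infsum_Un_disjoint) auto
  also have "(\<Sum>s\<in>C. ch s * x s) = x s0"
    using C L(2,3) by (simp add: sum.remove ch_def)
  finally have "x s0 = - (\<Sum>\<^sub>\<infinity>s\<in>S - C. ch s * x s)" by (simp add: eq_neg_iff_add_eq_0)
  hence "m = norm (\<Sum>\<^sub>\<infinity>s\<in>S - C. ch s * x s)" by (simp add: m_def)
  also have "\<dots> \<le> (\<Sum>\<^sub>\<infinity>s\<in>S - C. norm (ch s * x s))" by (rule norm_infsum_bound[OF sch])
  also have "\<dots> \<le> (\<Sum>\<^sub>\<infinity>s\<in>S - C. norm (x s))" by (rule infsum_mono[OF sch sSC]) (rule nch)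
  finally show False using tail m by linarith
qed

section \<open>The construction\<close>

definition cylinder_kernel :: "('t \<Rightarrow> ('k \<times> bool) list) \<Rightarrow> ('t \<Rightarrow> 'k set) \<Rightarrow> 't \<Rightarrow> 't \<Rightarrow> complex" where
  "cylinder_kernel \<rho> \<iota> r s = (if matches (\<rho> r) (\<iota> s) then 1 else 0)"

text \<open>\<open>\<rho> r\<close> is the cylinder indexed by \<open>r \<in> R\<close> and \<open>\<iota> s\<close> is the code of \<open>s \<in> S\<close>.\<close>

locale cylinder_setup =
  fixes K :: "'k set" and T R S :: "'t set"
    and \<rho> :: "'t \<Rightarrow> ('k \<times> bool) list" and \<iota> :: "'t \<Rightarrow> 'k set"
  assumes partition: "R \<union> S = T" "R \<inter> S = {}"
    and inj_code: "inj_on \<iota> S" and code_subset: "\<forall>s\<in>S. \<iota> s \<subseteq> K"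
    and patterns_onto: "\<forall>L\<in>lists (K \<times> UNIV). \<exists>r\<in>R. \<rho> r = L"
begin

abbreviation Q :: "('t \<Rightarrow> complex) \<Rightarrow> complex" where
  "Q x \<equiv> kernel_form (cylinder_kernel \<rho> \<iota>) R S x x"

sublocale bounded_kernel "cylinder_kernel \<rho> \<iota>" R S T
  using partition by unfold_locales (auto simp: cylinder_kernel_def)

lemma zero_subspace_vanishing_on_S: "zero_subspace T Q (vanishing_on T S)"
  unfolding zero_subspace_def
proof (intro conjI l1_subspace_vanishing_on ballI)
  fix v assume "v \<in> vanishing_on T S"
  hence "kernel_apply (cylinder_kernel \<rho> \<iota>) S v r = 0" for r
    unfolding vanishing_on_def kernel_apply_def by (auto intro: infsum_0)
  thus "Q v = 0" unfolding kernel_form_def by simp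
qed

lemma zero_subspace_vanishing_on_R: "zero_subspace T Q (vanishing_on T R)"
  unfolding zero_subspace_def
proof (intro conjI l1_subspace_vanishing_on ballI)
  fix v assume "v \<in> vanishing_on T R"
  thus "Q v = 0" unfolding vanishing_on_def kernel_form_def by (auto intro: infsum_0)
qed

lemma maximal_zero_subspace_vanishing_on_S: "maximal_zero_subspace T Q (vanishing_on T S)"
  unfolding maximal_zero_subspace_def
proof (intro conjI zero_subspace_vanishing_on_S allI impI)
  fix W assume W: "zero_subspace T Q W \<and> vanishing_on T S \<subseteq> W"
  hence Wl: "W \<subseteq> l1 T" and Wlin: "\<forall>x\<in>W. \<forall>y\<in>W. \<forall>a b. (\<lambda>i. a * x i + b * y i) \<in> W"
    and WQ: "\<forall>v\<in>W. Q v = 0"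
    unfolding zero_subspace_def l1_subspace_def by auto
  have "w \<in> vanishing_on T S" if w: "w \<in> W" for w
  proof -
    have wl: "w \<in> l1 T" using w Wl by blast
    \<comment> \<open>\<open>Q\<close> vanishes on \<open>w\<close> and on \<open>e\<^sub>r + w\<close>, which isolates the cylinder sum \<open>\<rho> r\<close> of \<open>w\<close>\<close>
    have apply0: "kernel_apply (cylinder_kernel \<rho> \<iota>) S w r = 0" if r: "r \<in> R" for r
    proof -
      have "r \<notin> S" "r \<in> T" using r partition by auto
      hence "unit_vec r \<in> W" using W unit_vec_vanishing_on[of r T S] by blast
      hence "(\<lambda>i. 1 * unit_vec r i + 1 * w i) \<in> W" using Wlin w by blast
      hence "(\<lambda>i. unit_vec r i + w i) \<in> W" by simp
      hence "Q (\<lambda>i. unit_vec r i + w i) = 0" using WQ by blast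
      moreover have "Q w = 0" using WQ w by blast
      ultimately show ?thesis using kernel_form_unit_vec_add[OF r \<open>r \<notin> S\<close> wl] by simp
    qed
    have "w s = 0" if s: "s \<in> S" for s
    proof (rule pattern_sums_zero_imp_zero[OF inj_code code_subset l1_summable_norm_on[OF wl S_subset] _ s])
      show "\<forall>L\<in>lists (K \<times> UNIV). (\<Sum>\<^sub>\<infinity>s\<in>S. (if matches L (\<iota> s) then 1 else 0) * w s) = 0"
      proof
        fix L :: "('k \<times> bool) list" assume "L \<in> lists (K \<times> UNIV)"
        then obtain r where r: "r \<in> R" "\<rho> r = L" using patterns_onto by blast
        show "(\<Sum>\<^sub>\<infinity>s\<in>S. (if matches L (\<iota> s) then 1 else 0) * w s) = 0"
          using apply0[OF r(1)] unfolding kernel_apply_def cylinder_kernel_def r(2) .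
      qed
    qed
    thus ?thesis using wl unfolding vanishing_on_def by blast
  qed
  thus "W = vanishing_on T S" using W by blast
qed

lemma has_density_vanishing_on_S:
  assumes "infinite R" "|R| =o |X|"
  shows "has_density T (vanishing_on T S) X"
proof (rule has_density_of_unit_vecs[OF _ R_subset _ assms(1) R_subset _ ordLeq_refl[OF card_of_Card_order] assms(2)])
  show "vanishing_on T S \<subseteq> l1 T" by (auto simp: vanishing_on_def)
  show "\<forall>a\<in>R. unit_vec a \<in> vanishing_on T S"
    using partition R_subset by (auto intro: unit_vec_vanishing_on)
  show "\<forall>v\<in>vanishing_on T S. \<forall>i. i \<notin> R \<longrightarrow> v i = 0"
    using partition by (auto simp: vanishing_on_def l1_def)
qed

lemma has_density_superset_vanishing_on_R:
  assumes V: "V \<subseteq> l1 T" "vanishing_on T R \<subseteq> V" and S: "infinite S" "|S| =o |T|"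
  shows "has_density T V T"
proof (rule has_density_of_unit_vecs[OF V(1) S_subset _ S(1) order_refl])
  show "\<forall>a\<in>S. unit_vec a \<in> V"
    using partition S_subset V(2) by (auto intro: unit_vec_vanishing_on)
  show "\<forall>v\<in>V. \<forall>i. i \<notin> T \<longrightarrow> v i = 0" using V(1) by (auto simp: l1_def)
  show "|T| \<le>o |S|" using S(2) by (simp add: ordIso_iff_ordLeq)
qed (rule S(2))

theorem exists_form_with_maximal_zero_subspaces:
  assumes "infinite R" "|R| =o |X|" "infinite S" "|S| =o |T|"
  shows "\<exists>P. cont_quad_poly T P \<and>
           (\<exists>V. maximal_zero_subspace T P V \<and> has_density T V X) \<and>
           (\<exists>W. maximal_zero_subspace T P W \<and> has_density T W T)"
proof -
  obtain W where W: "maximal_zero_subspace T Q W" "vanishing_on T R \<subseteq> W"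
    using zero_subspace_extends_to_maximal[OF zero_subspace_vanishing_on_R] by blast
  have "W \<subseteq> l1 T" using W(1) by (simp add: maximal_zero_subspace_def zero_subspace_def l1_subspace_def)
  hence "has_density T W T" using has_density_superset_vanishing_on_R W(2) assms(3,4) by blast
  thus ?thesis
    using cont_quad_poly_kernel_form maximal_zero_subspace_vanishing_on_S
      has_density_vanishing_on_S[OF assms(1,2)] W(1) by blast
qed

end

lemma exists_cylinder_setup:
  fixes K :: "'k set" and T :: "'t set"
  assumes K: "infinite K" and KT: "|K| <o |T|" and TP: "|T| \<le>o |Pow K|"
  obtains R S \<rho> \<iota> where "cylinder_setup K T R S \<rho> \<iota>"
    "infinite R" "|R| =o |K|" "infinite S" "|S| =o |T|"
proof -
  let ?L = "lists (K \<times> (UNIV :: bool set))"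
  have LK: "|?L| =o |K|" by (rule card_of_lists_Times_bool[OF K])
  hence "|?L| \<le>o |T|" using ordIso_ordLeq_trans ordLess_imp_ordLeq[OF KT] by blast
  then obtain j where j: "inj_on j ?L" "j ` ?L \<subseteq> T" unfolding card_of_ordLeq[symmetric] by blast
  define R where "R = j ` ?L"
  define S where "S = T - R"
  have "bij_betw j ?L R" unfolding R_def using j(1) by (rule bij_betw_imageI) simp
  hence "|?L| =o |R|" using card_of_ordIso by blast
  hence RK: "|R| =o |K|" using ordIso_transitive[OF ordIso_symmetric LK] by blast
  have "infinite R" using K card_of_ordIso_finite[OF RK] by blast
  have "infinite T" using K card_of_ordLeq_infinite[OF ordLess_imp_ordLeq[OF KT]] by blast
  have ST: "|S| =o |T|"
    unfolding S_def using card_of_Diff_ordLess_infinite[OF \<open>infinite T\<close> ordIso_ordLess_trans[OF RK KT]] .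
  have "infinite S" using \<open>infinite T\<close> card_of_ordIso_finite[OF ST] by blast
  obtain \<iota> where \<iota>: "inj_on \<iota> T" "\<iota> ` T \<subseteq> Pow K" using TP unfolding card_of_ordLeq[symmetric] by blast
  have "cylinder_setup K T R S (inv_into ?L j) \<iota>"
  proof
    show "R \<union> S = T" "R \<inter> S = {}" using j(2) unfolding R_def S_def by blast+
    show "inj_on \<iota> S" using \<iota>(1) by (rule inj_on_subset) (auto simp: S_def)
    show "\<forall>s\<in>S. \<iota> s \<subseteq> K" using \<iota>(2) by (auto simp: S_def)
    show "\<forall>L\<in>?L. \<exists>r\<in>R. inv_into ?L j r = L"
    proof
      fix L assume "L \<in> ?L"
      thus "\<exists>r\<in>R. inv_into ?L j r = L" using j(1) unfolding R_def by (intro bexI[of _ "j L"]) auto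
    qed
  qed
  thus thesis using that \<open>infinite R\<close> RK \<open>infinite S\<close> ST by blast
qed

theorem mainTheorem2:
  fixes K :: "'k set" and T :: "'t set"
  assumes "infinite K"
    and "(card_of (Func (UNIV :: nat set) K), cardSuc (card_of K)) \<in> ordLeq
           \<longrightarrow> (card_of T, cardSuc (card_of K)) \<in> ordIso"
    and "(cardSuc (card_of K), card_of (Func (UNIV :: nat set) K)) \<in> ordLeq
           \<longrightarrow> (card_of T, card_of (Func (UNIV :: nat set) K)) \<in> ordIso"
  shows "\<exists>P. cont_quad_poly T P \<and>
           (\<exists>V. maximal_zero_subspace T P V \<and> has_density T V K) \<and>
           (\<exists>W. maximal_zero_subspace T P W \<and> has_density T W T)"
proof -
  have "|K| <o |T|" "|T| \<le>o |Pow K|"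
    using card_of_max_cardSuc_Func_bounds[OF assms] by blast+
  then obtain R S \<rho> \<iota> where "cylinder_setup K T R S \<rho> \<iota>"
    "infinite R" "|R| =o |K|" "infinite S" "|S| =o |T|"
    using exists_cylinder_setup[OF assms(1)] by blast
  thus ?thesis by (rule cylinder_setup.exists_form_with_maximal_zero_subspaces)
qed

end
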